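(* Let $\Delta,\Sigma$ be alphabets, $\varphi:\Delta\to2^{\Sigma^*}$ a regular language substitution, and $K_1,K_2\subseteq\Delta^+$ regular languages such that $\mathcal{R}_1=(K_1,\varphi)$ and $\mathcal{R}_2=(K_2,\varphi)$ are finite. Then the set difference $\mathcal{R}_1-\mathcal{R}_2$ is a finite rational set of regular languages expressible as $(K_3,\varphi)$ for some regular language $K_3\subseteq K_1$.
   Context: A regular language substitution $\varphi:\Delta\to2^{\Sigma^*}$ maps each symbol to a regular language over $\Sigma$, extended by $\varphi(\delta w)=\varphi(\delta)\varphi(w)$. For $K\subseteq\Delta^+$, $(K,\varphi)=\{\varphi(w)\mid w\in K\}$; when $K$ is regular this set is a rational set of regular languages. *)

theory Defs
  imports Main
begin

definition lconc :: "'a list set \<Rightarrow> 'a list set \<Rightarrow> 'a list set" where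
  "lconc L M = {u @ v | u v. u \<in> L \<and> v \<in> M}"

definition lstar :: "'a list set \<Rightarrow> 'a list set" where
  "lstar L = {concat ws | ws. set ws \<subseteq> L}"

inductive regular :: "'a set \<Rightarrow> 'a list set \<Rightarrow> bool" for A :: "'a set" where
  reg_empty: "regular A {}"
| reg_eps: "regular A {[]}"
| reg_sym: "a \<in> A \<Longrightarrow> regular A {[a]}"
| reg_union: "regular A L \<Longrightarrow> regular A M \<Longrightarrow> regular A (L \<union> M)"
| reg_conc: "regular A L \<Longrightarrow> regular A M \<Longrightarrow> regular A (lconc L M)"
| reg_star: "regular A L \<Longrightarrow> regular A (lstar L)"

definition regular_subst :: "'d set \<Rightarrow> 's set \<Rightarrow> ('d \<Rightarrow> 's list set) \<Rightarrow> bool" where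
  "regular_subst Del Sig phi \<longleftrightarrow> (\<forall>d\<in>Del. regular Sig (phi d))"

fun subst_word :: "('d \<Rightarrow> 's list set) \<Rightarrow> 'd list \<Rightarrow> 's list set" where
  "subst_word phi [] = {[]}"
| "subst_word phi (d # w) = lconc (phi d) (subst_word phi w)"

definition rat_set :: "'d list set \<Rightarrow> ('d \<Rightarrow> 's list set) \<Rightarrow> 's list set set" where
  "rat_set K phi = (subst_word phi) ` K"

end

theory Submission
  imports Defs
begin

text \<open>Since \<open>(K\<^sub>1,\<phi>)\<close> is finite, so is the difference \<open>(K\<^sub>1,\<phi>) - (K\<^sub>2,\<phi>)\<close>.
  Choosing for each of its finitely many languages one word of \<open>K\<^sub>1\<close> that
  \<open>\<phi>\<close> maps onto it yields a finite, hence regular, language \<open>K\<^sub>3 \<subseteq> K\<^sub>1\<close>.\<close>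

lemma regular_singleton: "set w \<subseteq> A \<Longrightarrow> regular A {w}"
proof (induction w)
  case Nil
  show ?case by (rule reg_eps)
next
  case (Cons a w)
  have "regular A (lconc {[a]} {w})"
    using Cons by (intro reg_conc reg_sym) auto
  moreover have "lconc {[a]} {w} = {a # w}"
    by (auto simp: lconc_def)
  ultimately show ?case by simp
qed

lemma regular_finite: "finite K \<Longrightarrow> K \<subseteq> lists A \<Longrightarrow> regular A K"
proof (induction K rule: finite_induct)
  case empty
  show ?case by (rule reg_empty)
next
  case (insert w K)
  have "regular A ({w} \<union> K)"
    using insert by (intro reg_union regular_singleton) auto
  then show ?case by simp
qed

theorem proposition9:
  fixes Del :: "'d set" and Sig :: "'s set"
    and phi :: "'d \<Rightarrow> 's list set" and K1 K2 :: "'d list set"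
  assumes "finite Del" and "finite Sig"
    and "regular_subst Del Sig phi"
    and "regular Del K1" and "K1 \<subseteq> lists Del - {[]}"
    and "regular Del K2" and "K2 \<subseteq> lists Del - {[]}"
    and "finite (rat_set K1 phi)" and "finite (rat_set K2 phi)"
  shows "\<exists>K3. regular Del K3 \<and> K3 \<subseteq> K1
           \<and> rat_set K3 phi = rat_set K1 phi - rat_set K2 phi
           \<and> finite (rat_set K3 phi)"
proof -
  let ?R = "rat_set K1 phi - rat_set K2 phi"
  have "finite ?R" and "?R \<subseteq> subst_word phi ` K1"
    using assms(8) by (auto simp: rat_set_def)
  then obtain K3 where "K3 \<subseteq> K1" "finite K3" and image: "?R = subst_word phi ` K3"
    using finite_subset_image by metis
  have "regular Del K3"
    using \<open>finite K3\<close> \<open>K3 \<subseteq> K1\<close> assms(5) by (intro regular_finite) auto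
  moreover have "rat_set K3 phi = ?R"
    using image by (simp add: rat_set_def)
  ultimately show ?thesis
    using \<open>K3 \<subseteq> K1\<close> \<open>finite ?R\<close> by auto
qed

end
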